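(* Fix $\eta,\theta>0$, $N\ge1$, $t\ge0$. (i) If $F(s)=\int_0^s f(u)\,\mathrm{d}u$ for a piecewise continuous $f:\mathbb{R}_+\to\mathbb{R}$, then \[ E^{(\eta,\theta)}_{N,t}[F]=\sum_{j=1}^N h^{(f)}_j(t,\eta,\theta)+F(t). \] (ii) $E^{(\eta,\theta)}_{N,t}$ is a positive measure on $[0,t]$ of total mass at most $1$; in particular $|E^{(\eta,\theta)}_{N,t}[F]|\le\|F\|_\infty$ for all bounded measurable $F$. (iii) If $f\ge0$ then $h^{(f)}_j(t',\eta,\theta)\le0$ for all $j$ and all $t'\ge0$.
   Context: Let $V$ be of O'Connell–Yor type: $V\ge0$ smooth convex, and for some $c,C,c_0>0$: $V(x)\ge c|x|^2$ for $x\le -C$, $V'\le 0$, and $c_0V''\le -V'''\le c_0^{-1}V''+C\mathbf{1}_{\{x\ge -C\}}$. Let $\nu_\theta$ have density proportional to $\mathrm{e}^{-\theta x-V(x)}$, $F_\theta(x)=\nu_\theta((-\infty,x])$. Let $B_0,\dots,B_N$ be independent standard Brownian motions, $q_1,\dots,q_N$ i.i.d. uniform on $(0,1)$ independent of them, and for $\eta,\theta>0$ let $u_j(t)=u_j(t,\eta,\theta)$ solve $\mathrm{d}u_1=-V'(u_1)\mathrm{d}t-\theta\mathrm{d}t+\mathrm{d}B_0+\mathrm{d}B_1$, $\mathrm{d}u_j=(V'(u_{j-1})-V'(u_j))\mathrm{d}t+\mathrm{d}B_j-\mathrm{d}B_{j-1}$, with $u_j(0)=F_\eta^{-1}(q_j)$.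 Pseudo-Gibbs measure: for bounded measurable $F:[0,\infty)\to\mathbb{R}$ define recursively $E^{(\eta,\theta)}_{0,t}[F]=F(t)$ and, for $n\ge1$, \[ E^{(\eta,\theta)}_{n,t}[F]=\int_0^t\exp\Big(-\int_s^tV''(u_n(r))\,\mathrm{d}r\Big)V''(u_n(s))\,E^{(\eta,\theta)}_{n-1,s}[F]\,\mathrm{d}s ; \] equivalently $E^{(\eta,\theta)}_{N,t}[F]=\int_{0<s_0<\dots<s_{N-1}<t}\exp\big(-\sum_{j=0}^{N-1}\int_{s_j}^{s_{j+1}}V''(u_{j+1}(r))\mathrm{d}r\big)F(s_0)\prod_{j=0}^{N-1}V''(u_{j+1}(s_j))\,\mathrm{d}s$ with $s_N=t$, a (random) measure acting on functions of the variable $s_0$. For piecewise continuous $f$, let $h^{(f)}_j(t)=h^{(f)}_j(t,\eta,\theta)$ solve $\partial_th^{(f)}_1=-V''(u_1)h^{(f)}_1-f(t)$, $\partial_th^{(f)}_j=-V''(u_j)h^{(f)}_j+V''(u_{j-1})h^{(f)}_{j-1}$ ($j\ge2$), with $h^{(f)}_j(0)=0$. *)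

theory Defs
  imports "HOL-Analysis.Analysis"
begin

definition oy_type :: "(real \<Rightarrow> real) \<Rightarrow> (real \<Rightarrow> real) \<Rightarrow> (real \<Rightarrow> real) \<Rightarrow> (real \<Rightarrow> real) \<Rightarrow> bool" where
  "oy_type V V1 V2 V3 \<longleftrightarrow>
     (\<forall>k x. ((deriv ^^ k) V) differentiable (at x)) \<and>
     (\<forall>x. (V has_real_derivative V1 x) (at x)) \<and>
     (\<forall>x. (V1 has_real_derivative V2 x) (at x)) \<and>
     (\<forall>x. (V2 has_real_derivative V3 x) (at x)) \<and>
     convex_on UNIV V \<and> (\<forall>x. V x \<ge> 0) \<and> (\<forall>x. V1 x \<le> 0) \<and>
     (\<exists>c C c0. c > 0 \<and> C > 0 \<and> c0 > 0 \<and>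
        (\<forall>x. x \<le> -C \<longrightarrow> V x \<ge> c * x\<^sup>2) \<and>
        (\<forall>x. c0 * V2 x \<le> - V3 x \<and>
             - V3 x \<le> V2 x / c0 + C * (if x \<ge> -C then 1 else 0)))"

definition nu_cdf :: "(real \<Rightarrow> real) \<Rightarrow> real \<Rightarrow> real \<Rightarrow> real" where
  "nu_cdf V eta x =
     (LINT y:{..x}|lborel. exp (- eta * y - V y)) / (LINT y|lborel. exp (- eta * y - V y))"

definition piecewise_cont :: "(real \<Rightarrow> real) \<Rightarrow> bool" where
  "piecewise_cont f \<longleftrightarrow>
     (\<forall>T\<ge>0. \<exists>S. finite S \<and> continuous_on ({0..T} - S) f \<and>
        (\<forall>s\<in>S. (\<exists>l. (f \<longlongrightarrow> l) (at_left s)) \<and> (\<exists>l. (f \<longlongrightarrow> l) (at_right s))))"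

primrec pgE :: "nat \<Rightarrow> (real \<Rightarrow> real) \<Rightarrow> (nat \<Rightarrow> real \<Rightarrow> real) \<Rightarrow> real \<Rightarrow> (real \<Rightarrow> real) \<Rightarrow> real" where
  "pgE 0 V2 u t F = F t"
| "pgE (Suc n) V2 u t F =
     (LINT s:{0..t}|lborel.
        exp (- (LINT r:{s..t}|lborel. V2 (u (Suc n) r))) * V2 (u (Suc n) s) * pgE n V2 u s F)"

end

theory Submission
  imports Defs "HOL-Probability.Probability"
begin

(* Each h_j solves a linear equation h' = -V''(u_j) h + (source), so by variation of constants
   h_j(t) is the integral of its source against exp (-\<integral>_s^t V''(u_j)) V''(u_j(s)) ds, a kernel of
   total mass 1 - exp (-\<integral>_0^t V''(u_j)) \<le> 1.  Telescoping the equations, H_n = F + h_1 + ... + h_n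
   solves H_n' = V''(u_n) (H_(n-1) - H_n), so H_n(t) is the kernel integral of H_(n-1): this is the
   recursion defining E_(n,t), which gives (i).  Composing the kernels realises E_(N,t) as
   integration against a subprobability measure carried by [0,t], which gives (ii).  For (iii),
   h_1(t) = E_(1,t)[F] - F(t) \<le> 0 since F is nonnegative and nondecreasing, and h_(j+1) is the
   kernel integral of V''(u_j) h_j \<le> 0. *)

lemma convex_on_imp_mono_deriv:
  fixes f f' :: "real \<Rightarrow> real"
  assumes convex: "convex_on UNIV f" and deriv: "\<And>x. (f has_real_derivative f' x) (at x)"
  shows "mono f'"
proof (rule monoI)
  fix x y :: real
  assume "x \<le> y"
  have tangent: "f' x * (y - x) \<le> f y - f x" for x y
    by (rule convex_on_imp_above_tangent[OF convex]) (auto intro: has_field_derivative_at_within deriv)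
  from tangent[of x y] tangent[of y x] have "0 \<le> (f' y - f' x) * (y - x)"
    by (simp add: algebra_simps)
  with \<open>x \<le> y\<close> show "f' x \<le> f' y"
    by (cases "x = y") (auto simp: zero_le_mult_iff)
qed

lemma oy_type_V2_nonneg:
  assumes "oy_type V V1 V2 V3"
  shows "0 \<le> V2 x"
proof (rule mono_on_imp_deriv_nonneg[where A = UNIV])
  have "convex_on UNIV V" "\<And>x. (V has_real_derivative V1 x) (at x)"
    using assms by (auto simp: oy_type_def)
  then show "mono_on UNIV V1"
    by (rule convex_on_imp_mono_deriv)
  show "(V1 has_real_derivative V2 x) (at x)"
    using assms by (auto simp: oy_type_def)
qed simp

lemma oy_type_continuous_V2:
  assumes "oy_type V V1 V2 V3"
  shows "continuous_on S V2"
proof -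
  have "\<And>x. (V2 has_real_derivative V3 x) (at x)"
    using assms by (auto simp: oy_type_def)
  then show ?thesis
    by (meson DERIV_isCont continuous_at_imp_continuous_on)
qed

lemma compact_locally_bounded_imp_bounded:
  fixes f :: "'a::topological_space \<Rightarrow> 'b::real_normed_vector"
  assumes "compact K"
    and local_bound: "\<And>x. x \<in> K \<Longrightarrow> \<exists>B. eventually (\<lambda>y. y \<in> K \<longrightarrow> norm (f y) \<le> B) (nhds x)"
  shows "bounded (f ` K)"
proof -
  obtain U B where U: "\<And>x. x \<in> K \<Longrightarrow> open (U x) \<and> x \<in> U x"
    and bound: "\<And>x y. x \<in> K \<Longrightarrow> y \<in> U x \<Longrightarrow> y \<in> K \<Longrightarrow> norm (f y) \<le> B x"
    using local_bound unfolding eventually_nhds by metis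
  obtain C where C: "C \<subseteq> K" "finite C" "K \<subseteq> (\<Union>x\<in>C. U x)"
    by (rule compactE_image[OF \<open>compact K\<close>, of K U]) (use U in blast)+
  have "norm (f y) \<le> (\<Sum>x\<in>C. \<bar>B x\<bar>)" if "y \<in> K" for y
  proof -
    obtain x where x: "x \<in> C" "y \<in> U x"
      using C(3) \<open>y \<in> K\<close> by blast
    have "norm (f y) \<le> B x"
      using x C(1) \<open>y \<in> K\<close> by (intro bound) auto
    also have "\<dots> \<le> \<bar>B x\<bar>"
      by (rule abs_ge_self)
    also have "\<dots> \<le> (\<Sum>x\<in>C. \<bar>B x\<bar>)"
      using x(1) C(2) by (intro member_le_sum) auto
    finally show ?thesis .
  qed
  then show ?thesis
    by (auto simp: bounded_iff)
qed

lemma piecewise_cont_bounded: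
  fixes f :: "real \<Rightarrow> real"
  assumes "piecewise_cont f" "0 \<le> T"
  shows "bounded (f ` {0..T})"
proof (rule compact_locally_bounded_imp_bounded[OF compact_Icc])
  obtain S where S: "finite S" "continuous_on ({0..T} - S) f"
    and one_sided: "\<And>s. s \<in> S \<Longrightarrow> (\<exists>l. (f \<longlongrightarrow> l) (at_left s)) \<and> (\<exists>l. (f \<longlongrightarrow> l) (at_right s))"
    using assms(1)[unfolded piecewise_cont_def, rule_format, OF assms(2)] by blast
  fix x
  assume x: "x \<in> {0..T}"
  show "\<exists>B. eventually (\<lambda>y. y \<in> {0..T} \<longrightarrow> norm (f y) \<le> B) (nhds x)"
  proof (cases "x \<in> S")
    case True
    then obtain l1 l2 where "(f \<longlongrightarrow> l1) (at_left x)" "(f \<longlongrightarrow> l2) (at_right x)"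
      using one_sided by blast
    then have "eventually (\<lambda>y. \<bar>f y\<bar> < \<bar>l1\<bar> + 1) (at_left x)"
      and "eventually (\<lambda>y. \<bar>f y\<bar> < \<bar>l2\<bar> + 1) (at_right x)"
      by (auto intro: order_tendstoD(2) tendsto_rabs)
    then have "eventually (\<lambda>y. \<bar>f y\<bar> \<le> \<bar>l1\<bar> + \<bar>l2\<bar> + \<bar>f x\<bar> + 1) (nhds x)"
      unfolding eventually_nhds_conv_at eventually_at_split by (auto elim!: eventually_mono)
    then show ?thesis
      by (auto elim!: eventually_mono)
  next
    case False
    have "(f \<longlongrightarrow> f x) (at x within {0..T} - S)"
      using S(2) x False by (auto simp: continuous_on_def)
    then have "eventually (\<lambda>y. \<bar>f y\<bar> < \<bar>f x\<bar> + 1) (at x within {0..T} - S)"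
      by (intro order_tendstoD(2)[OF tendsto_rabs]) auto
    moreover have "eventually (\<lambda>y. y \<in> - S) (nhds x)"
      using False S(1) by (intro eventually_nhds_in_open) (auto simp: finite_imp_closed)
    ultimately have "eventually (\<lambda>y. y \<in> {0..T} \<longrightarrow> \<bar>f y\<bar> \<le> \<bar>f x\<bar> + 1) (nhds x)"
      unfolding eventually_at_filter by eventually_elim auto
    then show ?thesis
      by auto
  qed
qed

lemma piecewise_cont_integrable:
  fixes f :: "real \<Rightarrow> real"
  assumes f: "piecewise_cont f" and T: "0 \<le> T"
  shows "f integrable_on {0..T}"
proof -
  obtain S where S: "finite S" "continuous_on ({0..T} - S) f"
    using f T unfolding piecewise_cont_def by blast
  obtain B where B: "\<forall>x\<in>{0..T}. \<bar>f x\<bar> \<le> B"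
    using piecewise_cont_bounded[OF f T] by (auto simp: bounded_iff)
  have "S \<in> sets lebesgue"
    using S(1) by (intro negligible_imp_sets negligible_finite)
  then have L: "{0..T} - S \<in> sets lebesgue"
    by auto
  have "f measurable_on ({0..T} - S)"
    using continuous_imp_measurable_on_sets_lebesgue[OF S(2) L]
    by (subst measurable_on_iff_borel_measurable[OF L])
  then have "f measurable_on {0..T}"
    by (rule measurable_on_spike_set) (auto intro: negligible_subset[OF negligible_finite[OF S(1)]])
  then have "f \<in> borel_measurable (lebesgue_on {0..T})"
    by (subst (asm) measurable_on_iff_borel_measurable) simp
  then show ?thesis
    by (rule measurable_bounded_by_integrable_imp_integrable_real[where g = "\<lambda>_. B"])
      (use B in \<open>auto intro: integrable_const_ivl\<close>)
qed

lemma set_borel_integral_eq_integral_continuous_on: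
  fixes g :: "real \<Rightarrow> real"
  assumes "continuous_on {a..b} g"
  shows "(LINT x:{a..b}|lborel. g x) = integral {a..b} g"
  using borel_integrable_compact[OF compact_Icc assms]
  by (intro set_borel_integral_eq_integral(2)) (simp add: set_integrable_def)

lemma set_borel_integral_Icc_eq_diff:
  fixes a :: "real \<Rightarrow> real"
  assumes "continuous_on {0..t} a" "0 \<le> s" "s \<le> t"
  shows "(LINT r:{s..t}|lborel. a r) = integral {0..t} a - integral {0..s} a"
proof -
  have "(LINT r:{s..t}|lborel. a r) = integral {s..t} a"
    using assms by (intro set_borel_integral_eq_integral_continuous_on continuous_on_subset[OF assms(1)]) auto
  also have "\<dots> = integral {0..t} a - integral {0..s} a"
    using Henstock_Kurzweil_Integration.integral_combine[where f = a and a = 0 and c = s and b = t] assms integrable_continuous_interval[OF assms(1)]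
    by (auto simp: algebra_simps)
  finally show ?thesis .
qed

lemma has_integral_exp_neg_set_integral:
  fixes a :: "real \<Rightarrow> real"
  assumes t: "0 \<le> t" and a: "continuous_on {0..t} a"
  shows "((\<lambda>s. exp (- (LINT r:{s..t}|lborel. a r)) * a s) has_integral
           1 - exp (- integral {0..t} a)) {0..t}"
proof -
  define A where "A x = integral {0..x} a" for x
  have A: "(A has_real_derivative a x) (at x within {0..t})" if "x \<in> {0..t}" for x
    using integral_has_vector_derivative[OF a that] unfolding A_def
    by (simp add: has_real_derivative_iff_has_vector_derivative)
  have "((\<lambda>s. exp (A s - A t)) has_vector_derivative exp (A x - A t) * a x) (at x within {0..t})"
    if "x \<in> {0..t}" for x
    unfolding has_real_derivative_iff_has_vector_derivative[symmetric]
    by (auto intro!: derivative_eq_intros A that)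
  then have "((\<lambda>s. exp (A s - A t) * a s) has_integral exp (A t - A t) - exp (A 0 - A t)) {0..t}"
    by (intro fundamental_theorem_of_calculus t) auto
  then have "((\<lambda>s. exp (A s - A t) * a s) has_integral 1 - exp (- integral {0..t} a)) {0..t}"
    by (simp add: A_def)
  then show ?thesis
    by (rule has_integral_eq[rotated])
      (simp add: A_def set_borel_integral_Icc_eq_diff[OF a])
qed

lemma variation_of_constants:
  fixes a c H :: "real \<Rightarrow> real"
  assumes t: "0 \<le> t" and a: "continuous_on {0..t} a" and c: "continuous_on {0..t} c"
    and H: "continuous_on {0..t} H"
    and ode: "\<And>s. s \<in> {0..t} \<Longrightarrow> H s = integral {0..s} (\<lambda>r. c r - a r * H r)"
  shows "H t = (LINT s:{0..t}|lborel. exp (- (LINT r:{s..t}|lborel. a r)) * c s)"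
proof -
  define A where "A x = integral {0..x} a" for x
  define g where "g r = c r - a r * H r" for r
  have g: "continuous_on {0..t} g"
    unfolding g_def by (intro continuous_intros a c H)
  have A: "(A has_real_derivative a x) (at x within {0..t})" if "x \<in> {0..t}" for x
    using integral_has_vector_derivative[OF a that] unfolding A_def
    by (simp add: has_real_derivative_iff_has_vector_derivative)
  have G: "((\<lambda>x. integral {0..x} g) has_real_derivative g x) (at x within {0..t})" if "x \<in> {0..t}" for x
    using integral_has_vector_derivative[OF g that]
    by (simp add: has_real_derivative_iff_has_vector_derivative)
  define P where "P x = exp (A x) * integral {0..x} g" for x
  \<comment> \<open>Integrating factor: \<open>(exp A * H)' = exp A * c\<close>.\<close>
  have "(P has_vector_derivative exp (A x) * c x) (at x within {0..t})" if x: "x \<in> {0..t}" for x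
  proof -
    have "(P has_real_derivative exp (A x) * a x * integral {0..x} g + exp (A x) * g x) (at x within {0..t})"
      unfolding P_def by (auto intro!: derivative_eq_intros A G x)
    moreover have "integral {0..x} g = H x"
      using ode[OF x] by (simp add: g_def[abs_def])
    ultimately show ?thesis
      by (simp add: has_real_derivative_iff_has_vector_derivative g_def algebra_simps)
  qed
  then have "((\<lambda>x. exp (A x) * c x) has_integral P t - P 0) {0..t}"
    by (rule fundamental_theorem_of_calculus[OF t])
  moreover have "P 0 = 0"
    by (simp add: P_def)
  moreover have "P t = exp (A t) * H t"
    using ode[of t] t by (simp add: P_def g_def[abs_def])
  ultimately have I: "((\<lambda>x. exp (A x) * c x) has_integral exp (A t) * H t) {0..t}"
    by simp
  have A_cont: "continuous_on {0..t} A"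
    using A by (meson DERIV_continuous continuous_at_imp_continuous_on continuous_on_eq_continuous_within)
  have "(LINT s:{0..t}|lborel. exp (- (LINT r:{s..t}|lborel. a r)) * c s)
      = (LINT s:{0..t}|lborel. exp (- A t) * (exp (A s) * c s))"
    by (rule set_lebesgue_integral_cong)
      (auto simp: set_borel_integral_Icc_eq_diff[OF a] A_def exp_diff exp_minus field_simps)
  also have "\<dots> = integral {0..t} (\<lambda>s. exp (- A t) * (exp (A s) * c s))"
    by (intro set_borel_integral_eq_integral_continuous_on continuous_intros A_cont c)
  also have "\<dots> = exp (- A t) * (exp (A t) * H t)"
    using integral_unique[OF I] by simp
  also have "\<dots> = H t"
    by (simp add: mult.assoc[symmetric] exp_add[symmetric])
  finally show ?thesis ..
qed

lemma pgE_cong: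
  assumes "\<And>s. s \<in> {0..t} \<Longrightarrow> F s = G s" "0 \<le> t"
  shows "pgE n Vpp u t F = pgE n Vpp u t G"
  using assms
proof (induction n arbitrary: t)
  case (Suc n)
  have "pgE n Vpp u s F = pgE n Vpp u s G" if "s \<in> {0..t}" for s
    using Suc.prems that by (intro Suc.IH) auto
  then show ?case
    by (auto intro!: set_lebesgue_integral_cong)
qed simp

lemma (in subprob_space) integral_le_nonneg_const:
  fixes f :: "'a \<Rightarrow> real"
  assumes "integrable M f" "\<And>x. x \<in> space M \<Longrightarrow> f x \<le> c" "0 \<le> c"
  shows "integral\<^sup>L M f \<le> c"
proof -
  have "integral\<^sup>L M f \<le> integral\<^sup>L M (\<lambda>_. c)"
    using assms by (intro integral_mono) auto
  also have "\<dots> \<le> c"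
    using mult_left_le_one_le[OF assms(3) measure_nonneg subprob_measure_le_1] by simp
  finally show ?thesis .
qed

lemma (in subprob_space) abs_integral_le_const:
  fixes f :: "'a \<Rightarrow> real"
  assumes "integrable M f" "\<And>x. x \<in> space M \<Longrightarrow> \<bar>f x\<bar> \<le> c"
  shows "\<bar>integral\<^sup>L M f\<bar> \<le> c"
proof -
  have "0 \<le> c"
    using subprob_not_empty assms(2) by (meson abs_ge_zero ex_in_conv order_trans)
  have "\<bar>integral\<^sup>L M f\<bar> \<le> integral\<^sup>L M (\<lambda>x. \<bar>f x\<bar>)"
    by (rule integral_abs_bound)
  also have "\<dots> \<le> c"
    using assms \<open>0 \<le> c\<close> by (intro integral_le_nonneg_const) auto
  finally show ?thesis .
qed

(* Vpp stands for V''.  The cut-off makes the rate Borel measurable on the whole line, although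
   u k is only assumed continuous on [0,\<infinity>). *)
definition pg_rate :: "(real \<Rightarrow> real) \<Rightarrow> (nat \<Rightarrow> real \<Rightarrow> real) \<Rightarrow> nat \<Rightarrow> real \<Rightarrow> real" where
  "pg_rate Vpp u k x = indicator {0..} x * Vpp (u k x)"

definition pg_density :: "(real \<Rightarrow> real) \<Rightarrow> (nat \<Rightarrow> real \<Rightarrow> real) \<Rightarrow> nat \<Rightarrow> real \<Rightarrow> real \<Rightarrow> real" where
  "pg_density Vpp u k t s =
     indicator {0..t} s * exp (- (LINT r:{s..t}|lborel. pg_rate Vpp u k r)) * pg_rate Vpp u k s"

definition pg_kernel :: "(real \<Rightarrow> real) \<Rightarrow> (nat \<Rightarrow> real \<Rightarrow> real) \<Rightarrow> nat \<Rightarrow> real \<Rightarrow> real measure" where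
  "pg_kernel Vpp u k t = density lborel (\<lambda>s. ennreal (pg_density Vpp u k t s))"

primrec pg_measure :: "(real \<Rightarrow> real) \<Rightarrow> (nat \<Rightarrow> real \<Rightarrow> real) \<Rightarrow> nat \<Rightarrow> real \<Rightarrow> real measure" where
  "pg_measure Vpp u 0 t = return borel t"
| "pg_measure Vpp u (Suc n) t = pg_kernel Vpp u (Suc n) t \<bind> pg_measure Vpp u n"

lemma sets_pg_kernel [simp, measurable_cong]: "sets (pg_kernel Vpp u k t) = sets borel"
  by (simp add: pg_kernel_def)

lemma pg_density_outside: "s \<notin> {0..t} \<Longrightarrow> pg_density Vpp u k t s = 0"
  by (simp add: pg_density_def)

locale pseudo_gibbs =
  fixes Vpp :: "real \<Rightarrow> real" and u :: "nat \<Rightarrow> real \<Rightarrow> real" and N :: nat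
  assumes Vpp_nonneg: "\<And>x. 0 \<le> Vpp x"
    and continuous_Vpp: "continuous_on UNIV Vpp"
    and continuous_u: "\<And>k. 1 \<le> k \<Longrightarrow> k \<le> N \<Longrightarrow> continuous_on {0..} (u k)"
begin

lemma continuous_on_rate: "1 \<le> k \<Longrightarrow> k \<le> N \<Longrightarrow> continuous_on {0..t} (\<lambda>x. Vpp (u k x))"
  by (rule continuous_on_compose2[OF continuous_Vpp continuous_on_subset[OF continuous_u]]) auto

lemma borel_measurable_pg_rate:
  assumes "1 \<le> k" "k \<le> N"
  shows "pg_rate Vpp u k \<in> borel_measurable borel"
proof -
  have "continuous_on {0..} (\<lambda>x. Vpp (u k x))"
    by (rule continuous_on_compose2[OF continuous_Vpp continuous_u[OF assms]]) auto
  then show ?thesis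
    unfolding pg_rate_def[abs_def]
    using borel_measurable_continuous_on_indicator[of "{0..}" "\<lambda>x. Vpp (u k x)"] by simp
qed

lemma pg_density_nonneg: "0 \<le> pg_density Vpp u k t s"
  by (simp add: pg_density_def pg_rate_def Vpp_nonneg)

lemma pg_density_eq:
  assumes "s \<in> {0..t}"
  shows "pg_density Vpp u k t s = exp (- (LINT r:{s..t}|lborel. Vpp (u k r))) * Vpp (u k s)"
proof -
  have "(LINT r:{s..t}|lborel. pg_rate Vpp u k r) = (LINT r:{s..t}|lborel. Vpp (u k r))"
    using assms by (intro set_lebesgue_integral_cong) (auto simp: pg_rate_def)
  then show ?thesis
    using assms by (simp add: pg_density_def pg_rate_def)
qed

lemma measurable_pg_density:
  assumes "1 \<le> k" "k \<le> N"
  shows "(\<lambda>(t, s). pg_density Vpp u k t s) \<in> borel_measurable (borel \<Otimes>\<^sub>M borel)"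
proof -
  note [measurable] = borel_measurable_pg_rate[OF assms]
  have indicator_Icc: "indicator {a..b} x = (if a \<le> x \<and> x \<le> b then 1 else 0 :: real)" for a b x :: real
    by (simp add: indicator_def)
  show ?thesis
    unfolding pg_density_def[abs_def] set_lebesgue_integral_def indicator_Icc by measurable
qed

lemma borel_measurable_pg_density:
  "1 \<le> k \<Longrightarrow> k \<le> N \<Longrightarrow> pg_density Vpp u k t \<in> borel_measurable borel"
  using measurable_Pair2[OF measurable_pg_density] by simp

lemma nn_integral_pg_density_le_1:
  assumes k: "1 \<le> k" "k \<le> N"
  shows "(\<integral>\<^sup>+s. pg_density Vpp u k t s \<partial>lborel) \<le> 1"
proof (cases "0 \<le> t")
  case False
  then show ?thesis
    by (simp add: pg_density_outside)
next
  case True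
  define a where "a x = Vpp (u k x)" for x
  have a: "continuous_on {0..t} a"
    unfolding a_def by (rule continuous_on_rate[OF k])
  have "(\<integral>\<^sup>+s. pg_density Vpp u k t s \<partial>lborel)
      = (\<integral>\<^sup>+s. ennreal (exp (- (LINT r:{s..t}|lborel. a r)) * a s) * indicator {0..t} s \<partial>lborel)"
    by (intro nn_integral_cong) (simp add: pg_density_eq pg_density_outside a_def split: split_indicator)
  also have "\<dots> = ennreal (1 - exp (- integral {0..t} a))"
    by (rule nn_integral_has_integral_lebesgue'[OF _ has_integral_exp_neg_set_integral[OF True a]])
      (simp add: a_def Vpp_nonneg)
  also have "\<dots> \<le> 1"
    by simp
  finally show ?thesis .
qed

lemma subprob_space_pg_kernel:
  assumes "1 \<le> k" "k \<le> N"
  shows "subprob_space (pg_kernel Vpp u k t)"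
proof
  show "emeasure (pg_kernel Vpp u k t) (space (pg_kernel Vpp u k t)) \<le> 1"
    using nn_integral_pg_density_le_1[OF assms] borel_measurable_pg_density[OF assms]
    by (simp add: pg_kernel_def emeasure_density)
qed (simp add: pg_kernel_def)

lemma measurable_pg_kernel:
  assumes k: "1 \<le> k" "k \<le> N"
  shows "pg_kernel Vpp u k \<in> measurable borel (subprob_algebra borel)"
proof (rule measurable_subprob_algebra)
  fix A :: "real set"
  assume A: "A \<in> sets borel"
  note [measurable] = measurable_pg_density[OF k]
  have "(\<lambda>t. \<integral>\<^sup>+s. ennreal (pg_density Vpp u k t s) * indicator A s \<partial>lborel) \<in> borel_measurable borel"
    using A by measurable
  then show "(\<lambda>t. emeasure (pg_kernel Vpp u k t) A) \<in> borel_measurable borel"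
    using A borel_measurable_pg_density[OF k] by (simp add: pg_kernel_def emeasure_density)
qed (simp_all add: subprob_space_pg_kernel[OF k])

lemma measurable_pg_measure: "n \<le> N \<Longrightarrow> pg_measure Vpp u n \<in> measurable borel (subprob_algebra borel)"
proof (induction n)
  case 0
  then show ?case
    by (simp add: return_measurable[unfolded comp_def] flip: pg_measure.simps(1)[abs_def])
next
  case (Suc n)
  have "pg_measure Vpp u (Suc n) = (\<lambda>t. pg_kernel Vpp u (Suc n) t \<bind> pg_measure Vpp u n)"
    by (rule ext) simp
  also have "\<dots> \<in> measurable borel (subprob_algebra borel)"
    using Suc by (intro measurable_bind2[OF measurable_pg_kernel Suc.IH]) auto
  finally show ?case .
qed

lemma measurable_pg_measure_from_kernel:
  "n \<le> N \<Longrightarrow> pg_measure Vpp u n \<in> measurable (pg_kernel Vpp u k t) (subprob_algebra borel)"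
  using measurable_pg_measure by (simp cong: measurable_cong_sets)

lemma sets_pg_measure: "n \<le> N \<Longrightarrow> sets (pg_measure Vpp u n t) = sets borel"
  using sets_kernel[OF measurable_pg_measure] by simp

lemma subprob_space_pg_measure: "n \<le> N \<Longrightarrow> subprob_space (pg_measure Vpp u n t)"
  using subprob_space_kernel[OF measurable_pg_measure] by simp

lemma space_pg_measure: "n \<le> N \<Longrightarrow> space (pg_measure Vpp u n t) = UNIV"
  using sets_eq_imp_space_eq[OF sets_pg_measure] by simp

lemma emeasure_pg_measure_le_1:
  assumes "n \<le> N"
  shows "emeasure (pg_measure Vpp u n t) UNIV \<le> 1"
proof -
  have "space (pg_measure Vpp u n t) = UNIV"
    using assms by (rule space_pg_measure)
  moreover have "emeasure (pg_measure Vpp u n t) (space (pg_measure Vpp u n t)) \<le> 1"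
    using subprob_space_pg_measure[OF assms] by (rule subprob_space.emeasure_space_le_1)
  ultimately show ?thesis
    by metis
qed

lemma AE_pg_measure_in_Icc:
  "n \<le> N \<Longrightarrow> 0 \<le> t \<Longrightarrow> AE s in pg_measure Vpp u n t. s \<in> {0..t}"
proof (induction n arbitrary: t)
  case 0
  then have "AE s in return borel t. s \<in> {0..t}"
    by (subst AE_return) auto
  then show ?case
    by (simp only: pg_measure.simps)
next
  case (Suc n)
  have k: "1 \<le> Suc n" "Suc n \<le> N"
    using Suc.prems by auto
  have density_measurable: "(\<lambda>r. ennreal (pg_density Vpp u (Suc n) t r)) \<in> borel_measurable lborel"
    using measurable_compose[OF borel_measurable_pg_density[OF k] measurable_ennreal]
    by (simp only: measurable_lborel2)
  have "AE r in lborel. 0 < ennreal (pg_density Vpp u (Suc n) t r) \<longrightarrow>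
      (AE s in pg_measure Vpp u n r. s \<in> {0..t})"
  proof (rule AE_I2, rule impI)
    fix r
    assume "0 < ennreal (pg_density Vpp u (Suc n) t r)"
    then have r: "r \<in> {0..t}"
      by (rule contrapos_pp) (simp add: pg_density_outside)
    then have "AE s in pg_measure Vpp u n r. s \<in> {0..r}"
      using Suc.prems by (intro Suc.IH) auto
    then show "AE s in pg_measure Vpp u n r. s \<in> {0..t}"
      by (rule AE_mp) (use r in \<open>auto intro!: AE_I2\<close>)
  qed
  then have "AE r in pg_kernel Vpp u (Suc n) t. AE s in pg_measure Vpp u n r. s \<in> {0..t}"
    unfolding pg_kernel_def AE_density[OF density_measurable] .
  moreover have "Measurable.pred borel (\<lambda>s. s \<in> {0..t})"
    by measurable
  ultimately show ?case
    using AE_bind[OF measurable_pg_measure_from_kernel] Suc.prems by (simp only: pg_measure.simps)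
qed

lemma emeasure_pg_measure_outside_Icc:
  assumes "n \<le> N" "0 \<le> t"
  shows "emeasure (pg_measure Vpp u n t) (UNIV - {0..t}) = 0"
proof -
  have sets: "UNIV - {0..t} \<in> sets (pg_measure Vpp u n t)"
    using sets_pg_measure[OF assms(1)] by simp
  have "{s \<in> space (pg_measure Vpp u n t). s \<notin> {0..t}} = UNIV - {0..t}"
    using space_pg_measure[OF assms(1)] by blast
  from AE_iff_measurable[OF sets this] show ?thesis
    using AE_pg_measure_in_Icc[OF assms] by blast
qed

lemma pgE_eq_integral_if_bounded:
  fixes F :: "real \<Rightarrow> real"
  assumes F: "F \<in> borel_measurable borel" and B: "\<And>s. \<bar>F s\<bar> \<le> B"
  shows "n \<le> N \<Longrightarrow> 0 \<le> t \<Longrightarrow> pgE n Vpp u t F = (\<integral>s. F s \<partial>pg_measure Vpp u n t)"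
proof (induction n arbitrary: t)
  case 0
  then show ?case
    using F by (simp add: integral_return)
next
  case (Suc n)
  have k: "1 \<le> Suc n" "Suc n \<le> N"
    using Suc.prems by auto
  let ?K = "pg_kernel Vpp u (Suc n) t"
  have "(\<integral>s. F s \<partial>pg_measure Vpp u (Suc n) t) = (\<integral>r. (\<integral>s. F s \<partial>pg_measure Vpp u n r) \<partial>?K)"
  proof (simp, rule integral_bind[where B' = 1])
    show "pg_measure Vpp u n \<in> measurable ?K (subprob_algebra borel)"
      using Suc.prems by (intro measurable_pg_measure_from_kernel) auto
    show "finite_measure ?K"
      using subprob_space_pg_kernel[OF k] by (simp add: subprob_space_def)
    show "AE r in ?K. emeasure (pg_measure Vpp u n r) (space (pg_measure Vpp u n r)) \<le> ennreal 1"
      using subprob_space.emeasure_space_le_1[OF subprob_space_pg_measure] Suc.prems by simp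
  qed (use F B in auto)
  also have "\<dots> = (\<integral>r. pg_density Vpp u (Suc n) t r * (\<integral>s. F s \<partial>pg_measure Vpp u n r) \<partial>lborel)"
    unfolding pg_kernel_def
    using measurable_compose[OF measurable_pg_measure integral_measurable_subprob_algebra[OF F]] Suc.prems
    by (subst integral_density) (auto simp: borel_measurable_pg_density[OF k] pg_density_nonneg)
  also have "\<dots> = (\<integral>r. indicator {0..t} r *\<^sub>R
      (exp (- (LINT x:{r..t}|lborel. Vpp (u (Suc n) x))) * Vpp (u (Suc n) r) * pgE n Vpp u r F) \<partial>lborel)"
    using Suc.IH Suc.prems
    by (intro Bochner_Integration.integral_cong) (auto simp: pg_density_eq pg_density_outside split: split_indicator)
  finally show ?case
    by (simp add: set_lebesgue_integral_def)
qed

lemma set_integrable_pg_measure: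
  fixes F :: "real \<Rightarrow> real"
  assumes "set_borel_measurable borel {0..t} F" "bounded (F ` {0..t})" "n \<le> N"
  shows "set_integrable (pg_measure Vpp u n t) {0..t} F"
proof -
  interpret subprob_space "pg_measure Vpp u n t"
    by (rule subprob_space_pg_measure[OF assms(3)])
  obtain B where "\<forall>s\<in>{0..t}. \<bar>F s\<bar> \<le> B" "0 < B"
    using assms(2) by (auto simp: bounded_pos)
  then show ?thesis
    unfolding set_integrable_def using assms(1) sets_pg_measure[OF assms(3)]
    by (intro integrable_const_bound[where B = B])
      (auto simp: set_borel_measurable_def indicator_def cong: measurable_cong_sets)
qed

lemma pgE_eq_set_integral:
  fixes F :: "real \<Rightarrow> real"
  assumes F: "set_borel_measurable borel {0..t} F" and bounded: "bounded (F ` {0..t})"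
    and "n \<le> N" "0 \<le> t"
  shows "pgE n Vpp u t F = (LINT s:{0..t}|pg_measure Vpp u n t. F s)"
proof -
  obtain B where "\<forall>s\<in>{0..t}. \<bar>F s\<bar> \<le> B" "0 < B"
    using bounded by (auto simp: bounded_pos)
  then have B: "\<bar>indicator {0..t} s *\<^sub>R F s\<bar> \<le> B" for s
    by (auto simp: indicator_def)
  have "pgE n Vpp u t F = pgE n Vpp u t (\<lambda>s. indicator {0..t} s *\<^sub>R F s)"
    using assms by (intro pgE_cong) auto
  also have "\<dots> = (LINT s:{0..t}|pg_measure Vpp u n t. F s)"
    using pgE_eq_integral_if_bounded[OF F[unfolded set_borel_measurable_def] B] assms
    by (simp add: set_lebesgue_integral_def)
  finally show ?thesis .
qed

lemma pgE_eq_integral: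
  fixes F :: "real \<Rightarrow> real"
  assumes F: "F \<in> borel_measurable borel" and "bounded (F ` {0..t})" "n \<le> N" "0 \<le> t"
  shows "pgE n Vpp u t F = (\<integral>s. F s \<partial>pg_measure Vpp u n t)"
proof -
  have "set_borel_measurable borel {0..t} F"
    using F by (simp add: set_borel_measurable_def)
  then have "pgE n Vpp u t F = (LINT s:{0..t}|pg_measure Vpp u n t. F s)"
    using assms by (intro pgE_eq_set_integral) auto
  also have "\<dots> = (\<integral>s. F s \<partial>pg_measure Vpp u n t)"
  proof -
    have "AE s in pg_measure Vpp u n t. s \<in> {0..t}"
      using assms by (intro AE_pg_measure_in_Icc)
    then have "AE s in pg_measure Vpp u n t. indicator {0..t} s *\<^sub>R F s = F s"
      by eventually_elim simp
    then show ?thesis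
      unfolding set_lebesgue_integral_def
      using F sets_pg_measure[OF assms(3)] by (intro integral_cong_AE) (auto cong: measurable_cong_sets)
  qed
  finally show ?thesis .
qed

lemma abs_pgE_le_SUP:
  fixes F :: "real \<Rightarrow> real"
  assumes F: "set_borel_measurable borel {0..t} F" and S: "{0..t} \<subseteq> S" "bounded (F ` S)"
    and "n \<le> N" "0 \<le> t"
  shows "\<bar>pgE n Vpp u t F\<bar> \<le> (SUP s\<in>S. \<bar>F s\<bar>)"
proof -
  interpret subprob_space "pg_measure Vpp u n t"
    by (rule subprob_space_pg_measure) fact
  have bdd: "bdd_above ((\<lambda>s. \<bar>F s\<bar>) ` S)"
    using S(2) unfolding bounded_iff bdd_above_def by auto
  have le_SUP: "\<bar>F s\<bar> \<le> (SUP s\<in>S. \<bar>F s\<bar>)" if "s \<in> S" for s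
    using that bdd by (rule cSUP_upper)
  have "0 \<in> S"
    using S(1) \<open>0 \<le> t\<close> by auto
  then have SUP_nonneg: "0 \<le> (SUP s\<in>S. \<bar>F s\<bar>)"
    by (rule order_trans[OF abs_ge_zero le_SUP])
  have bounded: "bounded (F ` {0..t})"
    using S by (intro bounded_subset[OF S(2)] image_mono)
  have "\<bar>indicator {0..t} s *\<^sub>R F s\<bar> \<le> (SUP s\<in>S. \<bar>F s\<bar>)" for s
    using le_SUP[of s] S(1) SUP_nonneg by (cases "s \<in> {0..t}") auto
  then have "\<bar>LINT s:{0..t}|pg_measure Vpp u n t. F s\<bar> \<le> (SUP s\<in>S. \<bar>F s\<bar>)"
    unfolding set_lebesgue_integral_def
    using set_integrable_pg_measure[OF F bounded \<open>n \<le> N\<close>]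
    by (intro abs_integral_le_const) (simp_all add: set_integrable_def)
  then show ?thesis
    using pgE_eq_set_integral[OF F bounded \<open>n \<le> N\<close> \<open>0 \<le> t\<close>] by simp
qed

end


locale pseudo_gibbs_response = pseudo_gibbs +
  fixes f :: "real \<Rightarrow> real" and h :: "nat \<Rightarrow> real \<Rightarrow> real"
  assumes integrable_f: "\<And>T. 0 \<le> T \<Longrightarrow> f integrable_on {0..T}"
    and continuous_h: "\<And>j. 1 \<le> j \<Longrightarrow> j \<le> N \<Longrightarrow> continuous_on {0..} (h j)"
    and h_1: "\<And>s. 0 \<le> s \<Longrightarrow> h 1 s = integral {0..s} (\<lambda>r. - Vpp (u 1 r) * h 1 r - f r)"
    and h_Suc: "\<And>j s. 1 \<le> j \<Longrightarrow> Suc j \<le> N \<Longrightarrow> 0 \<le> s \<Longrightarrow>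
       h (Suc j) s = integral {0..s} (\<lambda>r. - Vpp (u (Suc j) r) * h (Suc j) r + Vpp (u j r) * h j r)"
begin

lemma continuous_on_h: "1 \<le> j \<Longrightarrow> j \<le> N \<Longrightarrow> continuous_on {0..t} (h j)"
  by (rule continuous_on_subset[OF continuous_h]) auto

lemma continuous_on_primitive: "0 \<le> T \<Longrightarrow> continuous_on {0..T} (\<lambda>s. integral {0..s} f)"
  by (rule indefinite_integral_continuous_1[OF integrable_f])

lemma primitive_plus_sum_h:
  assumes "1 \<le> m" "m \<le> N" "0 \<le> s"
  shows "integral {0..s} f + (\<Sum>j=1..m. h j s) = integral {0..s} (\<lambda>r. - Vpp (u m r) * h m r)"
  using assms(1,2)
proof (induction m rule: nat_induct_at_least)
  case base
  have "(\<lambda>r. - Vpp (u 1 r) * h 1 r) integrable_on {0..s}"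
    using base by (intro integrable_continuous_interval continuous_intros continuous_on_rate continuous_on_h) auto
  then have "integral {0..s} f + h 1 s = integral {0..s} (\<lambda>r. f r + (- Vpp (u 1 r) * h 1 r - f r))"
    using integrable_f[OF \<open>0 \<le> s\<close>] h_1[OF \<open>0 \<le> s\<close>]
    by (subst Henstock_Kurzweil_Integration.integral_add) (auto intro: integrable_diff)
  then show ?case
    by simp
next
  case (Suc m)
  have m: "m \<le> N"
    using Suc by simp
  have "integral {0..s} f + (\<Sum>j=1..Suc m. h j s) = (integral {0..s} f + (\<Sum>j=1..m. h j s)) + h (Suc m) s"
    using Suc by simp
  also have "\<dots> = integral {0..s} (\<lambda>r. - Vpp (u m r) * h m r)
      + integral {0..s} (\<lambda>r. - Vpp (u (Suc m) r) * h (Suc m) r + Vpp (u m r) * h m r)"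
    using Suc.IH[OF m] h_Suc[OF Suc.hyps Suc.prems \<open>0 \<le> s\<close>] by simp
  also have "\<dots> = integral {0..s}
      (\<lambda>r. - Vpp (u m r) * h m r + (- Vpp (u (Suc m) r) * h (Suc m) r + Vpp (u m r) * h m r))"
    using Suc by (intro Henstock_Kurzweil_Integration.integral_add[symmetric] integrable_continuous_interval
        continuous_intros continuous_on_rate continuous_on_h) auto
  also have "\<dots> = integral {0..s} (\<lambda>r. - Vpp (u (Suc m) r) * h (Suc m) r)"
    by simp
  finally show ?case .
qed

lemma pgE_primitive:
  assumes "n \<le> N" "0 \<le> t"
  shows "pgE n Vpp u t (\<lambda>s. integral {0..s} f) = integral {0..t} f + (\<Sum>j=1..n. h j t)"
  using assms
proof (induction n arbitrary: t)
  case (Suc n)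
  define H where "H m s = integral {0..s} f + (\<Sum>j=1..m. h j s)" for m s
  have H_cont: "continuous_on {0..t} (H m)" if "m \<le> N" for m
    unfolding H_def using that Suc.prems
    by (intro continuous_intros continuous_on_primitive continuous_on_sum continuous_on_h) auto
  have k: "1 \<le> Suc n" "Suc n \<le> N"
    using Suc.prems by auto
  have "pgE (Suc n) Vpp u t (\<lambda>s. integral {0..s} f) = (LINT r:{0..t}|lborel.
      exp (- (LINT x:{r..t}|lborel. Vpp (u (Suc n) x))) * (Vpp (u (Suc n) r) * H n r))"
    using Suc by (auto intro!: set_lebesgue_integral_cong simp: H_def)
  also have "\<dots> = H (Suc n) t"
  proof (rule variation_of_constants[symmetric, OF \<open>0 \<le> t\<close> continuous_on_rate[OF k]])
    show "continuous_on {0..t} (\<lambda>r. Vpp (u (Suc n) r) * H n r)"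
      using k by (intro continuous_intros continuous_on_rate H_cont) auto
    show "continuous_on {0..t} (H (Suc n))"
      using k by (intro H_cont)
  next
    fix r
    assume "r \<in> {0..t}"
    then have "H (Suc n) r = integral {0..r} (\<lambda>x. - Vpp (u (Suc n) x) * h (Suc n) x)"
      unfolding H_def using primitive_plus_sum_h[OF k] by simp
    then show "H (Suc n) r = integral {0..r} (\<lambda>x. Vpp (u (Suc n) x) * H n x - Vpp (u (Suc n) x) * H (Suc n) x)"
      by (simp add: H_def algebra_simps)
  qed
  finally show ?case
    by (simp add: H_def)
qed simp

lemma h_nonpos:
  assumes f_nonneg: "\<And>s. 0 \<le> s \<Longrightarrow> 0 \<le> f s" and "1 \<le> j" "j \<le> N" "0 \<le> t"
  shows "h j t \<le> 0"
  using assms(2-4)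
proof (induction j arbitrary: t rule: nat_induct_at_least)
  case base
  define F where "F s = integral {0..s} f" for s
  have F_mono: "F s \<le> F t" if "s \<in> {0..t}" for s
    unfolding F_def using that base integrable_f f_nonneg by (intro integral_subset_le) auto
  have F_nonneg: "0 \<le> F t"
    unfolding F_def using base integrable_f f_nonneg by (intro integral_nonneg) auto
  have F_cont: "continuous_on {0..t} F"
    unfolding F_def using continuous_on_primitive base by simp
  have F_meas: "set_borel_measurable borel {0..t} F"
    unfolding set_borel_measurable_def using borel_measurable_continuous_on_indicator[OF _ F_cont] by simp
  have F_bounded: "bounded (F ` {0..t})"
    using compact_continuous_image[OF F_cont compact_Icc] by (rule compact_imp_bounded)
  interpret subprob_space "pg_measure Vpp u 1 t"
    using base by (intro subprob_space_pg_measure) simp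
  have "pgE 1 Vpp u t F = (LINT s:{0..t}|pg_measure Vpp u 1 t. F s)"
    using base by (intro pgE_eq_set_integral F_meas F_bounded) auto
  also have "\<dots> \<le> F t"
    unfolding set_lebesgue_integral_def
    using base F_mono F_nonneg
    by (intro integral_le_nonneg_const set_integrable_pg_measure[OF F_meas F_bounded, unfolded set_integrable_def])
      (auto simp: indicator_def)
  finally show "h 1 t \<le> 0"
    using pgE_primitive[of 1 t] base by (simp add: F_def[abs_def])
next
  case (Suc j)
  have "h (Suc j) t = (LINT s:{0..t}|lborel.
      exp (- (LINT r:{s..t}|lborel. Vpp (u (Suc j) r))) * (Vpp (u j s) * h j s))"
  proof (rule variation_of_constants[OF \<open>0 \<le> t\<close>])
    show "continuous_on {0..t} (\<lambda>r. Vpp (u (Suc j) r))" "continuous_on {0..t} (h (Suc j))"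
      "continuous_on {0..t} (\<lambda>s. Vpp (u j s) * h j s)"
      using Suc by (intro continuous_intros continuous_on_rate continuous_on_h; simp)+
  next
    fix s
    assume "s \<in> {0..t}"
    then show "h (Suc j) s = integral {0..s} (\<lambda>r. Vpp (u j r) * h j r - Vpp (u (Suc j) r) * h (Suc j) r)"
      using h_Suc[of j s] Suc by (simp add: algebra_simps)
  qed
  also have "\<dots> \<le> 0"
  proof -
    have "Vpp (u j s) * h j s \<le> 0" if "s \<in> {0..t}" for s
      using Suc.IH[of s] Suc.prems that Vpp_nonneg by (auto intro: mult_nonneg_nonpos)
    then have "0 \<le> (\<integral>s. - (indicator {0..t} s *\<^sub>R
        (exp (- (LINT r:{s..t}|lborel. Vpp (u (Suc j) r))) * (Vpp (u j s) * h j s))) \<partial>lborel)"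
      by (intro integral_nonneg_AE AE_I2) (auto simp: indicator_def intro: mult_nonneg_nonpos)
    then show ?thesis
      unfolding set_lebesgue_integral_def by simp
  qed
  finally show ?case .
qed

end

theorem proposition6p2:
  fixes V V1 V2 V3 :: "real \<Rightarrow> real"
    and eta theta t :: real and N :: nat
    and B u :: "nat \<Rightarrow> real \<Rightarrow> real"
    and q :: "nat \<Rightarrow> real"
    and f :: "real \<Rightarrow> real"
    and h :: "nat \<Rightarrow> real \<Rightarrow> real"
  assumes V: "oy_type V V1 V2 V3"
    and eta: "eta > 0" and theta: "theta > 0" and N: "N \<ge> 1" and t: "t \<ge> 0"
    and B_cont: "\<And>j. j \<le> N \<Longrightarrow> continuous_on {0..} (B j)"
    and B_0: "\<And>j. j \<le> N \<Longrightarrow> B j 0 = 0"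
    and q: "\<And>j. 1 \<le> j \<Longrightarrow> j \<le> N \<Longrightarrow> q j \<in> {0<..<1}"
    and u_init: "\<And>j. 1 \<le> j \<Longrightarrow> j \<le> N \<Longrightarrow> nu_cdf V eta (u j 0) = q j"
    and u_cont: "\<And>j. 1 \<le> j \<Longrightarrow> j \<le> N \<Longrightarrow> continuous_on {0..} (u j)"
    and u_1: "\<And>s. s \<ge> 0 \<Longrightarrow>
       u 1 s = u 1 0 + integral {0..s} (\<lambda>r. - V1 (u 1 r) - theta) + B 0 s + B 1 s"
    and u_j: "\<And>j s. 2 \<le> j \<Longrightarrow> j \<le> N \<Longrightarrow> s \<ge> 0 \<Longrightarrow>
       u j s = u j 0 + integral {0..s} (\<lambda>r. V1 (u (j - 1) r) - V1 (u j r)) + B j s - B (j - 1) s"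
    and f: "piecewise_cont f"
    and h_cont: "\<And>j. 1 \<le> j \<Longrightarrow> j \<le> N \<Longrightarrow> continuous_on {0..} (h j)"
    and h_1: "\<And>s. s \<ge> 0 \<Longrightarrow>
       h 1 s = integral {0..s} (\<lambda>r. - V2 (u 1 r) * h 1 r - f r)"
    and h_j: "\<And>j s. 2 \<le> j \<Longrightarrow> j \<le> N \<Longrightarrow> s \<ge> 0 \<Longrightarrow>
       h j s = integral {0..s} (\<lambda>r. - V2 (u j r) * h j r + V2 (u (j - 1) r) * h (j - 1) r)"
  shows
    "pgE N V2 u t (\<lambda>s. integral {0..s} f) = (\<Sum>j=1..N. h j t) + integral {0..t} f
     \<and> (\<exists>\<mu> :: real measure. sets \<mu> = sets borel \<and>
          emeasure \<mu> (UNIV - {0..t}) = 0 \<and> emeasure \<mu> UNIV \<le> 1 \<and>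
          (\<forall>F. F \<in> borel_measurable borel \<longrightarrow> bounded (F ` {0..}) \<longrightarrow>
               pgE N V2 u t F = (\<integral>s. F s \<partial>\<mu>)))
     \<and> (\<forall>F. F \<in> borel_measurable borel \<longrightarrow> bounded (F ` {0..}) \<longrightarrow>
               \<bar>pgE N V2 u t F\<bar> \<le> (SUP s\<in>{0..}. \<bar>F s\<bar>))
     \<and> ((\<forall>s\<ge>0. f s \<ge> 0) \<longrightarrow> (\<forall>j\<in>{1..N}. \<forall>t'\<ge>0. h j t' \<le> 0))"
proof -
  interpret pseudo_gibbs_response V2 u N f h
  proof unfold_locales
    show "0 \<le> V2 x" for x
      using oy_type_V2_nonneg[OF V] .
    show "continuous_on UNIV V2"
      using oy_type_continuous_V2[OF V] .
    show "f integrable_on {0..T}" if "0 \<le> T" for T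
      using piecewise_cont_integrable[OF f that] .
    show "h (Suc j) s = integral {0..s} (\<lambda>r. - V2 (u (Suc j) r) * h (Suc j) r + V2 (u j r) * h j r)"
      if "1 \<le> j" "Suc j \<le> N" "0 \<le> s" for j s
      using h_j[of "Suc j" s] that by simp
  qed (use u_cont h_cont h_1 in auto)
  have "pgE N V2 u t F = (\<integral>s. F s \<partial>pg_measure V2 u N t)"
    and "\<bar>pgE N V2 u t F\<bar> \<le> (SUP s\<in>{0..}. \<bar>F s\<bar>)"
    if "F \<in> borel_measurable borel" "bounded (F ` {0..})" for F
    using that t bounded_subset[OF that(2) image_mono[of "{0..t}" "{0..}"]]
    by (auto intro!: pgE_eq_integral abs_pgE_le_SUP simp: set_borel_measurable_def)
  then show ?thesis
    using pgE_primitive[OF order.refl t] sets_pg_measure[of N t] emeasure_pg_measure_le_1[of N t]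
      emeasure_pg_measure_outside_Icc[OF order.refl t] h_nonpos
    by (auto simp: add.commute intro!: exI[of _ "pg_measure V2 u N t"])
qed

end
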